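(* Let $(W,\cdot,\iota)$ be any constraint domain. In the HyLL sequent calculus (which has no cut rule), for all sets $\Gamma$ and multisets $\Delta,\Delta'$ of judgements, propositions $A,C$ and worlds $u,w$: (1) if $\Gamma;\Delta\Rightarrow A@u$ and $\Gamma;\Delta',A@u\Rightarrow C@w$ are derivable, then $\Gamma;\Delta,\Delta'\Rightarrow C@w$ is derivable; (2) if $\Gamma;\cdot\Rightarrow A@u$ and $\Gamma,A@u;\Delta\Rightarrow C@w$ are derivable, then $\Gamma;\Delta\Rightarrow C@w$ is derivable.
   Context: HyLL (hybrid linear logic). A constraint domain is a monoid $(W,\cdot,\iota)$; its elements are called worlds. World expressions are built from elements of $W$, world variables $u,v,\dots$ and $\cdot$, and are considered up to the monoid equations. Terms are untyped first-order terms built from term variables $x,y,\dots$ and function symbols; world variables never occur in terms and term variables never occur in worlds. Propositions: $A,B ::= a\,\vec t \mid A\otimes B\mid \mathbf 1\mid A\multimap B\mid A\,\&\,B\mid \top\mid A\oplus B\mid \mathbf 0\mid\ !A\mid \forall x.A\mid \exists x.A\mid (A\ \mathsf{at}\ w)\mid \downarrow u.A\mid \forall u.A\mid\exists u.A$, where $a\,\vec t$ is an atomic predicate applied to terms, $x$ a term variable, $u$ a world variable (bound in $\downarrow u.A,\forall u.A,\exists u.A$), and $w$ a world expression. $\alpha$ ranges over variables of either kind, $\tau$ over terms or worlds accordingly, $[\tau/\alpha]A$ is capture-avoiding substitution; propositions are taken up to $\alpha$-conversion. A judgement is $A@w$. A sequent is $\Gamma;\Delta\Rightarrow C@w$ with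 $\Gamma$ a set of judgements (unrestricted context) and $\Delta$ a multiset of judgements (linear context). Derivable sequents are those generated by the rules (premises $\Longrightarrow$ conclusion): init: $\Gamma; a\,\vec t@u\Rightarrow a\,\vec t@u$. copy: $\Gamma,A@u;\Delta,A@u\Rightarrow C@w \Longrightarrow \Gamma,A@u;\Delta\Rightarrow C@w$. $\otimes$R: $\Gamma;\Delta\Rightarrow A@w$ and $\Gamma;\Delta'\Rightarrow B@w\Longrightarrow\Gamma;\Delta,\Delta'\Rightarrow A\otimes B@w$. $\otimes$L: $\Gamma;\Delta,A@u,B@u\Rightarrow C@w\Longrightarrow\Gamma;\Delta,A\otimes B@u\Rightarrow C@w$. $\mathbf1$R: $\Gamma;\cdot\Rightarrow \mathbf 1@w$. $\mathbf 1$L: $\Gamma;\Delta\Rightarrow C@w\Longrightarrow\Gamma;\Delta,\mathbf 1@u\Rightarrow C@w$. $\multimap$R: $\Gamma;\Delta,A@w\Rightarrow B@w\Longrightarrow\Gamma;\Delta\Rightarrow A\multimap B@w$. $\multimap$L: $\Gamma;\Delta\Rightarrow A@u$ and $\Gamma;\Delta',B@u\Rightarrow C@w\Longrightarrow\Gamma;\Delta,\Delta',A\multimap B@u\Rightarrow C@w$. $\top$R: $\Gamma;\Delta\Rightarrow\top@w$. $\mathbf 0$L: $\Gamma;\Delta,\mathbf 0@u\Rightarrow C@w$. $\&$R: $\Gamma;\Delta\Rightarrow A@w$ and $\Gamma;\Delta\Rightarrow B@w\Longrightarrow\Gamma;\Delta\Rightarrow A\&B@w$. $\&$L$_i$ ($i=1,2$):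 $\Gamma;\Delta,A_i@u\Rightarrow C@w\Longrightarrow\Gamma;\Delta,A_1\&A_2@u\Rightarrow C@w$. $\oplus$R$_i$: $\Gamma;\Delta\Rightarrow A_i@w\Longrightarrow\Gamma;\Delta\Rightarrow A_1\oplus A_2@w$. $\oplus$L: $\Gamma;\Delta,A@u\Rightarrow C@w$ and $\Gamma;\Delta,B@u\Rightarrow C@w\Longrightarrow\Gamma;\Delta,A\oplus B@u\Rightarrow C@w$. $\forall$R: $\Gamma;\Delta\Rightarrow A@w\Longrightarrow\Gamma;\Delta\Rightarrow\forall\alpha.A@w$ ($\alpha$ fresh for the conclusion). $\forall$L: $\Gamma;\Delta,[\tau/\alpha]A@u\Rightarrow C@w\Longrightarrow\Gamma;\Delta,\forall\alpha.A@u\Rightarrow C@w$. $\exists$R: $\Gamma;\Delta\Rightarrow[\tau/\alpha]A@w\Longrightarrow\Gamma;\Delta\Rightarrow\exists\alpha.A@w$. $\exists$L: $\Gamma;\Delta,A@u\Rightarrow C@w\Longrightarrow\Gamma;\Delta,\exists\alpha.A@u\Rightarrow C@w$ ($\alpha$ fresh for the conclusion). $!$R: $\Gamma;\cdot\Rightarrow A@w\Longrightarrow\Gamma;\cdot\Rightarrow\ !A@w$. $!$L: $\Gamma,A@u;\Delta\Rightarrow C@w\Longrightarrow\Gamma;\Delta,!A@u\Rightarrow C@w$. $\mathsf{at}$R: $\Gamma;\Delta\Rightarrow A@u\Longrightarrow\Gamma;\Delta\Rightarrow(A\ \mathsf{at}\ u)@v$. $\mathsf{at}$L: $\Gamma;\Delta,A@u\Rightarrow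 C@w\Longrightarrow\Gamma;\Delta,(A\ \mathsf{at}\ u)@v\Rightarrow C@w$. $\downarrow$R: $\Gamma;\Delta\Rightarrow[w/u]A@w\Longrightarrow\Gamma;\Delta\Rightarrow\downarrow u.A@w$. $\downarrow$L: $\Gamma;\Delta,[v/u]A@v\Rightarrow C@w\Longrightarrow\Gamma;\Delta,\downarrow u.A@v\Rightarrow C@w$. *)

theory Defs
  imports Main "HOL-Library.Multiset"
begin

section \<open>Syntax of HyLL (locally nameless representation)\<close>

text \<open>Bound variables
  are represented by de Bruijn indices (separately for term binders and world
  binders), so that propositions are automatically identified up to alpha-conversion.\<close>

datatype 'f trm = TFree nat | TBnd nat | TApp 'f "'f trm list"

datatype 'w wexp = WElem 'w | WFree nat | WBnd nat | WMul "'w wexp" "'w wexp"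

inductive weq :: "'w::monoid_mult wexp \<Rightarrow> 'w wexp \<Rightarrow> bool" where
  weq_refl: "weq a a"
| weq_sym: "weq a b \<Longrightarrow> weq b a"
| weq_trans: "weq a b \<Longrightarrow> weq b c \<Longrightarrow> weq a c"
| weq_cong: "weq a a' \<Longrightarrow> weq b b' \<Longrightarrow> weq (WMul a b) (WMul a' b')"
| weq_assoc: "weq (WMul (WMul a b) c) (WMul a (WMul b c))"
| weq_unitl: "weq (WMul (WElem 1) a) a"
| weq_unitr: "weq (WMul a (WElem 1)) a"
| weq_elem: "weq (WMul (WElem x) (WElem y)) (WElem (x * y))"

lemma equivp_weq: "equivp weq"
  by (rule equivpI) (auto intro: reflpI sympI transpI weq.intros)

quotient_type (overloaded) 'w world = "'w::monoid_mult wexp" / weq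
  by (rule equivp_weq)

lift_definition wconst :: "'w::monoid_mult \<Rightarrow> 'w world" is WElem .
lift_definition wvar :: "nat \<Rightarrow> 'w::monoid_mult world" is WFree .
lift_definition wmul :: "'w::monoid_mult world \<Rightarrow> 'w world \<Rightarrow> 'w world" is WMul
  by (rule weq_cong)

primrec wopen_raw :: "nat \<Rightarrow> 'w wexp \<Rightarrow> 'w wexp \<Rightarrow> 'w wexp" where
  "wopen_raw k s (WElem a) = WElem a"
| "wopen_raw k s (WFree x) = WFree x"
| "wopen_raw k s (WBnd i) = (if i = k then s else WBnd i)"
| "wopen_raw k s (WMul a b) = WMul (wopen_raw k s a) (wopen_raw k s b)"

primrec wfv_raw :: "'w wexp \<Rightarrow> nat set" where
  "wfv_raw (WElem a) = {}"
| "wfv_raw (WFree x) = {x}"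
| "wfv_raw (WBnd i) = {}"
| "wfv_raw (WMul a b) = wfv_raw a \<union> wfv_raw b"

primrec wbv_raw :: "'w wexp \<Rightarrow> nat set" where
  "wbv_raw (WElem a) = {}"
| "wbv_raw (WFree x) = {}"
| "wbv_raw (WBnd i) = {i}"
| "wbv_raw (WMul a b) = wbv_raw a \<union> wbv_raw b"

lemma weq_wopen1: "weq a b \<Longrightarrow> weq (wopen_raw k s a) (wopen_raw k s b)"
  by (induction rule: weq.induct) (auto intro: weq.intros)

lemma weq_wopen2: "weq s s' \<Longrightarrow> weq (wopen_raw k s a) (wopen_raw k s' a)"
  by (induction a) (auto intro: weq.intros)

lift_definition wopen :: "nat \<Rightarrow> 'w::monoid_mult world \<Rightarrow> 'w world \<Rightarrow> 'w world" is wopen_raw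
  by (meson weq_trans weq_wopen1 weq_wopen2)

lift_definition wfv :: "'w::monoid_mult world \<Rightarrow> nat set" is wfv_raw
  by (erule weq.induct) auto

lift_definition wbv :: "'w::monoid_mult world \<Rightarrow> nat set" is wbv_raw
  by (erule weq.induct) auto

primrec topen_trm :: "nat \<Rightarrow> 'f trm \<Rightarrow> 'f trm \<Rightarrow> 'f trm" where
  "topen_trm k s (TFree x) = TFree x"
| "topen_trm k s (TBnd i) = (if i = k then s else TBnd i)"
| "topen_trm k s (TApp f ts) = TApp f (map (topen_trm k s) ts)"

primrec tfv_trm :: "'f trm \<Rightarrow> nat set" where
  "tfv_trm (TFree x) = {x}"
| "tfv_trm (TBnd i) = {}"
| "tfv_trm (TApp f ts) = \<Union> (set (map tfv_trm ts))"

primrec tbv_trm :: "'f trm \<Rightarrow> nat set" where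
  "tbv_trm (TFree x) = {}"
| "tbv_trm (TBnd i) = {i}"
| "tbv_trm (TApp f ts) = \<Union> (set (map tbv_trm ts))"

text \<open>Propositions. AllT/ExT bind a term variable, Down/AllW/ExW bind a world variable.\<close>
declare [[typedef_overloaded]]

datatype ('p, 'f, 'w::monoid_mult) hprop =
    Atm 'p "'f trm list"
  | Tensor "('p, 'f, 'w) hprop" "('p, 'f, 'w) hprop"
  | One
  | Lolli "('p, 'f, 'w) hprop" "('p, 'f, 'w) hprop"
  | With "('p, 'f, 'w) hprop" "('p, 'f, 'w) hprop"
  | Top
  | Plus "('p, 'f, 'w) hprop" "('p, 'f, 'w) hprop"
  | Zero
  | Bang "('p, 'f, 'w) hprop"
  | AllT "('p, 'f, 'w) hprop"
  | ExT "('p, 'f, 'w) hprop"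
  | AtW "('p, 'f, 'w) hprop" "'w world"
  | Down "('p, 'f, 'w) hprop"
  | AllW "('p, 'f, 'w) hprop"
  | ExW "('p, 'f, 'w) hprop"

primrec topen :: "nat \<Rightarrow> 'f trm \<Rightarrow> ('p, 'f, 'w::monoid_mult) hprop \<Rightarrow> ('p, 'f, 'w) hprop" where
  "topen k s (Atm p ts) = Atm p (map (topen_trm k s) ts)"
| "topen k s (Tensor A B) = Tensor (topen k s A) (topen k s B)"
| "topen k s One = One"
| "topen k s (Lolli A B) = Lolli (topen k s A) (topen k s B)"
| "topen k s (With A B) = With (topen k s A) (topen k s B)"
| "topen k s Top = Top"
| "topen k s (Plus A B) = Plus (topen k s A) (topen k s B)"
| "topen k s Zero = Zero"
| "topen k s (Bang A) = Bang (topen k s A)"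
| "topen k s (AllT A) = AllT (topen (Suc k) s A)"
| "topen k s (ExT A) = ExT (topen (Suc k) s A)"
| "topen k s (AtW A w) = AtW (topen k s A) w"
| "topen k s (Down A) = Down (topen k s A)"
| "topen k s (AllW A) = AllW (topen k s A)"
| "topen k s (ExW A) = ExW (topen k s A)"

primrec wopenp :: "nat \<Rightarrow> 'w world \<Rightarrow> ('p, 'f, 'w::monoid_mult) hprop \<Rightarrow> ('p, 'f, 'w) hprop" where
  "wopenp k s (Atm p ts) = Atm p ts"
| "wopenp k s (Tensor A B) = Tensor (wopenp k s A) (wopenp k s B)"
| "wopenp k s One = One"
| "wopenp k s (Lolli A B) = Lolli (wopenp k s A) (wopenp k s B)"
| "wopenp k s (With A B) = With (wopenp k s A) (wopenp k s B)"
| "wopenp k s Top = Top"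
| "wopenp k s (Plus A B) = Plus (wopenp k s A) (wopenp k s B)"
| "wopenp k s Zero = Zero"
| "wopenp k s (Bang A) = Bang (wopenp k s A)"
| "wopenp k s (AllT A) = AllT (wopenp k s A)"
| "wopenp k s (ExT A) = ExT (wopenp k s A)"
| "wopenp k s (AtW A w) = AtW (wopenp k s A) (wopen k s w)"
| "wopenp k s (Down A) = Down (wopenp (Suc k) s A)"
| "wopenp k s (AllW A) = AllW (wopenp (Suc k) s A)"
| "wopenp k s (ExW A) = ExW (wopenp (Suc k) s A)"

primrec tfv :: "('p, 'f, 'w::monoid_mult) hprop \<Rightarrow> nat set" where
  "tfv (Atm p ts) = \<Union> (set (map tfv_trm ts))"
| "tfv (Tensor A B) = tfv A \<union> tfv B"
| "tfv One = {}"
| "tfv (Lolli A B) = tfv A \<union> tfv B"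
| "tfv (With A B) = tfv A \<union> tfv B"
| "tfv Top = {}"
| "tfv (Plus A B) = tfv A \<union> tfv B"
| "tfv Zero = {}"
| "tfv (Bang A) = tfv A"
| "tfv (AllT A) = tfv A"
| "tfv (ExT A) = tfv A"
| "tfv (AtW A w) = tfv A"
| "tfv (Down A) = tfv A"
| "tfv (AllW A) = tfv A"
| "tfv (ExW A) = tfv A"

primrec wfvp :: "('p, 'f, 'w::monoid_mult) hprop \<Rightarrow> nat set" where
  "wfvp (Atm p ts) = {}"
| "wfvp (Tensor A B) = wfvp A \<union> wfvp B"
| "wfvp One = {}"
| "wfvp (Lolli A B) = wfvp A \<union> wfvp B"
| "wfvp (With A B) = wfvp A \<union> wfvp B"
| "wfvp Top = {}"
| "wfvp (Plus A B) = wfvp A \<union> wfvp B"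
| "wfvp Zero = {}"
| "wfvp (Bang A) = wfvp A"
| "wfvp (AllT A) = wfvp A"
| "wfvp (ExT A) = wfvp A"
| "wfvp (AtW A w) = wfvp A \<union> wfv w"
| "wfvp (Down A) = wfvp A"
| "wfvp (AllW A) = wfvp A"
| "wfvp (ExW A) = wfvp A"

text \<open>Genuine propositions
  of the paper are exactly the locally closed ones.\<close>
primrec tlc :: "nat \<Rightarrow> ('p, 'f, 'w::monoid_mult) hprop \<Rightarrow> bool" where
  "tlc k (Atm p ts) = (\<forall>t\<in>set ts. \<forall>i\<in>tbv_trm t. i < k)"
| "tlc k (Tensor A B) = (tlc k A \<and> tlc k B)"
| "tlc k One = True"
| "tlc k (Lolli A B) = (tlc k A \<and> tlc k B)"
| "tlc k (With A B) = (tlc k A \<and> tlc k B)"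
| "tlc k Top = True"
| "tlc k (Plus A B) = (tlc k A \<and> tlc k B)"
| "tlc k Zero = True"
| "tlc k (Bang A) = tlc k A"
| "tlc k (AllT A) = tlc (Suc k) A"
| "tlc k (ExT A) = tlc (Suc k) A"
| "tlc k (AtW A w) = tlc k A"
| "tlc k (Down A) = tlc k A"
| "tlc k (AllW A) = tlc k A"
| "tlc k (ExW A) = tlc k A"

primrec wlc :: "nat \<Rightarrow> ('p, 'f, 'w::monoid_mult) hprop \<Rightarrow> bool" where
  "wlc k (Atm p ts) = True"
| "wlc k (Tensor A B) = (wlc k A \<and> wlc k B)"
| "wlc k One = True"
| "wlc k (Lolli A B) = (wlc k A \<and> wlc k B)"
| "wlc k (With A B) = (wlc k A \<and> wlc k B)"
| "wlc k Top = True"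
| "wlc k (Plus A B) = (wlc k A \<and> wlc k B)"
| "wlc k Zero = True"
| "wlc k (Bang A) = wlc k A"
| "wlc k (AllT A) = wlc k A"
| "wlc k (ExT A) = wlc k A"
| "wlc k (AtW A w) = (wlc k A \<and> (\<forall>i\<in>wbv w. i < k))"
| "wlc k (Down A) = wlc (Suc k) A"
| "wlc k (AllW A) = wlc (Suc k) A"
| "wlc k (ExW A) = wlc (Suc k) A"

definition is_term :: "'f trm \<Rightarrow> bool" where
  "is_term t \<longleftrightarrow> tbv_trm t = {}"

definition is_world :: "'w::monoid_mult world \<Rightarrow> bool" where
  "is_world w \<longleftrightarrow> wbv w = {}"

definition is_prop :: "('p, 'f, 'w::monoid_mult) hprop \<Rightarrow> bool" where
  "is_prop A \<longleftrightarrow> tlc 0 A \<and> wlc 0 A"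

datatype ('p, 'f, 'w::monoid_mult) judg = Jdg "('p, 'f, 'w) hprop" "'w world"

fun is_judg :: "('p, 'f, 'w::monoid_mult) judg \<Rightarrow> bool" where
  "is_judg (Jdg A w) \<longleftrightarrow> is_prop A \<and> is_world w"

fun tfvj :: "('p, 'f, 'w::monoid_mult) judg \<Rightarrow> nat set" where
  "tfvj (Jdg A w) = tfv A"

fun wfvj :: "('p, 'f, 'w::monoid_mult) judg \<Rightarrow> nat set" where
  "wfvj (Jdg A w) = wfvp A \<union> wfv w"

definition tfresh :: "nat \<Rightarrow> ('p, 'f, 'w::monoid_mult) judg set \<Rightarrow> ('p, 'f, 'w) judg multiset
    \<Rightarrow> ('p, 'f, 'w) judg \<Rightarrow> bool" where
  "tfresh x G D J \<longleftrightarrow> x \<notin> (\<Union>j\<in>G. tfvj j) \<and> x \<notin> (\<Union>j\<in>set_mset D. tfvj j) \<and> x \<notin> tfvj J"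

definition wfresh :: "nat \<Rightarrow> ('p, 'f, 'w::monoid_mult) judg set \<Rightarrow> ('p, 'f, 'w) judg multiset
    \<Rightarrow> ('p, 'f, 'w) judg \<Rightarrow> bool" where
  "wfresh x G D J \<longleftrightarrow> x \<notin> (\<Union>j\<in>G. wfvj j) \<and> x \<notin> (\<Union>j\<in>set_mset D. wfvj j) \<and> x \<notin> wfvj J"

text \<open>The cut-free HyLL sequent calculus: seq G D J means G ; D => J is derivable.\<close>
inductive seq :: "('p, 'f, 'w::monoid_mult) judg set \<Rightarrow> ('p, 'f, 'w) judg multiset
    \<Rightarrow> ('p, 'f, 'w) judg \<Rightarrow> bool" where
  init: "seq G {# Jdg (Atm p ts) u #} (Jdg (Atm p ts) u)"
| copy: "Jdg A u \<in> G \<Longrightarrow> seq G (D + {# Jdg A u #}) J \<Longrightarrow> seq G D J"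
| tensorR: "seq G D (Jdg A w) \<Longrightarrow> seq G D' (Jdg B w) \<Longrightarrow> seq G (D + D') (Jdg (Tensor A B) w)"
| tensorL: "seq G (D + {# Jdg A u, Jdg B u #}) J \<Longrightarrow> seq G (D + {# Jdg (Tensor A B) u #}) J"
| oneR: "seq G {#} (Jdg One w)"
| oneL: "seq G D J \<Longrightarrow> seq G (D + {# Jdg One u #}) J"
| lolliR: "seq G (D + {# Jdg A w #}) (Jdg B w) \<Longrightarrow> seq G D (Jdg (Lolli A B) w)"
| lolliL: "seq G D (Jdg A u) \<Longrightarrow> seq G (D' + {# Jdg B u #}) J
           \<Longrightarrow> seq G (D + D' + {# Jdg (Lolli A B) u #}) J"
| topR: "seq G D (Jdg Top w)"
| zeroL: "seq G (D + {# Jdg Zero u #}) J"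
| withR: "seq G D (Jdg A w) \<Longrightarrow> seq G D (Jdg B w) \<Longrightarrow> seq G D (Jdg (With A B) w)"
| withL1: "seq G (D + {# Jdg A u #}) J \<Longrightarrow> seq G (D + {# Jdg (With A B) u #}) J"
| withL2: "seq G (D + {# Jdg B u #}) J \<Longrightarrow> seq G (D + {# Jdg (With A B) u #}) J"
| plusR1: "seq G D (Jdg A w) \<Longrightarrow> seq G D (Jdg (Plus A B) w)"
| plusR2: "seq G D (Jdg B w) \<Longrightarrow> seq G D (Jdg (Plus A B) w)"
| plusL: "seq G (D + {# Jdg A u #}) J \<Longrightarrow> seq G (D + {# Jdg B u #}) J
          \<Longrightarrow> seq G (D + {# Jdg (Plus A B) u #}) J"
| allTR: "tfresh x G D (Jdg (AllT A) w) \<Longrightarrow> seq G D (Jdg (topen 0 (TFree x) A) w)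
          \<Longrightarrow> seq G D (Jdg (AllT A) w)"
| allTL: "is_term t \<Longrightarrow> seq G (D + {# Jdg (topen 0 t A) u #}) J
          \<Longrightarrow> seq G (D + {# Jdg (AllT A) u #}) J"
| exTR: "is_term t \<Longrightarrow> seq G D (Jdg (topen 0 t A) w) \<Longrightarrow> seq G D (Jdg (ExT A) w)"
| exTL: "tfresh x G (D + {# Jdg (ExT A) u #}) J \<Longrightarrow> seq G (D + {# Jdg (topen 0 (TFree x) A) u #}) J
          \<Longrightarrow> seq G (D + {# Jdg (ExT A) u #}) J"
| allWR: "wfresh x G D (Jdg (AllW A) w) \<Longrightarrow> seq G D (Jdg (wopenp 0 (wvar x) A) w)
          \<Longrightarrow> seq G D (Jdg (AllW A) w)"
| allWL: "is_world v \<Longrightarrow> seq G (D + {# Jdg (wopenp 0 v A) u #}) J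
          \<Longrightarrow> seq G (D + {# Jdg (AllW A) u #}) J"
| exWR: "is_world v \<Longrightarrow> seq G D (Jdg (wopenp 0 v A) w) \<Longrightarrow> seq G D (Jdg (ExW A) w)"
| exWL: "wfresh x G (D + {# Jdg (ExW A) u #}) J \<Longrightarrow> seq G (D + {# Jdg (wopenp 0 (wvar x) A) u #}) J
          \<Longrightarrow> seq G (D + {# Jdg (ExW A) u #}) J"
| bangR: "seq G {#} (Jdg A w) \<Longrightarrow> seq G {#} (Jdg (Bang A) w)"
| bangL: "seq (insert (Jdg A u) G) D J \<Longrightarrow> seq G (D + {# Jdg (Bang A) u #}) J"
| atR: "seq G D (Jdg A u) \<Longrightarrow> seq G D (Jdg (AtW A u) v)"
| atL: "seq G (D + {# Jdg A u #}) J \<Longrightarrow> seq G (D + {# Jdg (AtW A u) v #}) J"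
| downR: "seq G D (Jdg (wopenp 0 w A) w) \<Longrightarrow> seq G D (Jdg (Down A) w)"
| downL: "seq G (D + {# Jdg (wopenp 0 v A) v #}) J \<Longrightarrow> seq G (D + {# Jdg (Down A) v #}) J"

end

theory Submission
  imports Defs
begin

text \<open>Cut is admissible by induction on the cut formula, with nested inductions on the two
  derivations.  A cut whose premises end in a right and a left rule for the cut formula is reduced
  to cuts on immediate subformulas (for a quantifier, on an instance of its body, which has the
  same size); every other cut is permuted above the last rule of one of its premises.  A cut on an
  unrestricted hypothesis becomes a linear cut on the same formula wherever the hypothesis is
  copied, so both statements are proved together, formula by formula.

  The quantifier cases need derivations to be stable under substituting a term or a world for an
  eigenvariable.  This is obtained by passing to an equivalent calculus in which the premise of an
  eigenvariable rule must hold for all variables outside some finite set.\<close>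

section \<open>Substitution for free variables\<close>

primrec tsubst_trm :: "nat \<Rightarrow> 'f trm \<Rightarrow> 'f trm \<Rightarrow> 'f trm" where
  "tsubst_trm x s (TFree y) = (if y = x then s else TFree y)"
| "tsubst_trm x s (TBnd i) = TBnd i"
| "tsubst_trm x s (TApp f ts) = TApp f (map (tsubst_trm x s) ts)"

primrec tsubstp :: "nat \<Rightarrow> 'f trm \<Rightarrow> ('p, 'f, 'w::monoid_mult) hprop \<Rightarrow> ('p, 'f, 'w) hprop" where
  "tsubstp x s (Atm p ts) = Atm p (map (tsubst_trm x s) ts)"
| "tsubstp x s (Tensor A B) = Tensor (tsubstp x s A) (tsubstp x s B)"
| "tsubstp x s One = One"
| "tsubstp x s (Lolli A B) = Lolli (tsubstp x s A) (tsubstp x s B)"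
| "tsubstp x s (With A B) = With (tsubstp x s A) (tsubstp x s B)"
| "tsubstp x s Top = Top"
| "tsubstp x s (Plus A B) = Plus (tsubstp x s A) (tsubstp x s B)"
| "tsubstp x s Zero = Zero"
| "tsubstp x s (Bang A) = Bang (tsubstp x s A)"
| "tsubstp x s (AllT A) = AllT (tsubstp x s A)"
| "tsubstp x s (ExT A) = ExT (tsubstp x s A)"
| "tsubstp x s (AtW A w) = AtW (tsubstp x s A) w"
| "tsubstp x s (Down A) = Down (tsubstp x s A)"
| "tsubstp x s (AllW A) = AllW (tsubstp x s A)"
| "tsubstp x s (ExW A) = ExW (tsubstp x s A)"

fun tsubstj :: "nat \<Rightarrow> 'f trm \<Rightarrow> ('p, 'f, 'w::monoid_mult) judg \<Rightarrow> ('p, 'f, 'w) judg" where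
  "tsubstj x s (Jdg A w) = Jdg (tsubstp x s A) w"

primrec wsubst_raw :: "nat \<Rightarrow> 'w wexp \<Rightarrow> 'w wexp \<Rightarrow> 'w wexp" where
  "wsubst_raw x s (WElem a) = WElem a"
| "wsubst_raw x s (WFree y) = (if y = x then s else WFree y)"
| "wsubst_raw x s (WBnd i) = WBnd i"
| "wsubst_raw x s (WMul a b) = WMul (wsubst_raw x s a) (wsubst_raw x s b)"

lemma weq_wsubst_raw_left: "weq a b \<Longrightarrow> weq (wsubst_raw x s a) (wsubst_raw x s b)"
  by (induction rule: weq.induct) (auto intro: weq.intros)

lemma weq_wsubst_raw_right: "weq s s' \<Longrightarrow> weq (wsubst_raw x s a) (wsubst_raw x s' a)"
  by (induction a) (auto intro: weq.intros)

lift_definition wsubst :: "nat \<Rightarrow> 'w::monoid_mult world \<Rightarrow> 'w world \<Rightarrow> 'w world" is wsubst_raw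
  by (meson weq_trans weq_wsubst_raw_left weq_wsubst_raw_right)

primrec wsubstp :: "nat \<Rightarrow> 'w world \<Rightarrow> ('p, 'f, 'w::monoid_mult) hprop \<Rightarrow> ('p, 'f, 'w) hprop" where
  "wsubstp x s (Atm p ts) = Atm p ts"
| "wsubstp x s (Tensor A B) = Tensor (wsubstp x s A) (wsubstp x s B)"
| "wsubstp x s One = One"
| "wsubstp x s (Lolli A B) = Lolli (wsubstp x s A) (wsubstp x s B)"
| "wsubstp x s (With A B) = With (wsubstp x s A) (wsubstp x s B)"
| "wsubstp x s Top = Top"
| "wsubstp x s (Plus A B) = Plus (wsubstp x s A) (wsubstp x s B)"
| "wsubstp x s Zero = Zero"
| "wsubstp x s (Bang A) = Bang (wsubstp x s A)"
| "wsubstp x s (AllT A) = AllT (wsubstp x s A)"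
| "wsubstp x s (ExT A) = ExT (wsubstp x s A)"
| "wsubstp x s (AtW A w) = AtW (wsubstp x s A) (wsubst x s w)"
| "wsubstp x s (Down A) = Down (wsubstp x s A)"
| "wsubstp x s (AllW A) = AllW (wsubstp x s A)"
| "wsubstp x s (ExW A) = ExW (wsubstp x s A)"

fun wsubstj :: "nat \<Rightarrow> 'w world \<Rightarrow> ('p, 'f, 'w::monoid_mult) judg \<Rightarrow> ('p, 'f, 'w) judg" where
  "wsubstj x s (Jdg A w) = Jdg (wsubstp x s A) (wsubst x s w)"

lemma topen_trm_closed: "tbv_trm s = {} \<Longrightarrow> topen_trm k t s = s"
  by (induction s) (auto simp: map_idI)

lemma tsubst_trm_topen_trm:
  "tbv_trm s = {}
    \<Longrightarrow> tsubst_trm x s (topen_trm k t r) = topen_trm k (tsubst_trm x s t) (tsubst_trm x s r)"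
  by (induction r) (auto simp: topen_trm_closed)

lemma tsubst_trm_fresh: "x \<notin> tfv_trm r \<Longrightarrow> tsubst_trm x s r = r"
  by (induction r) (auto simp: map_idI)

lemma tbv_tsubst_trm: "tbv_trm (tsubst_trm x s r) \<subseteq> tbv_trm r \<union> tbv_trm s"
  by (induction r) auto

lemma is_term_tsubst_trm: "is_term s \<Longrightarrow> is_term t \<Longrightarrow> is_term (tsubst_trm x s t)"
  unfolding is_term_def using tbv_tsubst_trm by blast

lemma finite_tfv_trm: "finite (tfv_trm r)"
  by (induction r) auto

lemma tsubstp_topen:
  "is_term s \<Longrightarrow> tsubstp x s (topen k t A) = topen k (tsubst_trm x s t) (tsubstp x s A)"
  unfolding is_term_def by (induction A arbitrary: k) (auto simp: tsubst_trm_topen_trm)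

lemma tsubstp_fresh: "x \<notin> tfv A \<Longrightarrow> tsubstp x s A = A"
  by (induction A) (auto simp: tsubst_trm_fresh map_idI)

lemma finite_tfv: "finite (tfv A)"
  by (induction A) (auto simp: finite_tfv_trm)

lemma wopen_raw_closed: "wbv_raw s = {} \<Longrightarrow> wopen_raw k t s = s"
  by (induction s) auto

lemma wsubst_raw_wopen_raw:
  "wbv_raw v = {}
    \<Longrightarrow> wsubst_raw x v (wopen_raw k s a) = wopen_raw k (wsubst_raw x v s) (wsubst_raw x v a)"
  by (induction a) (auto simp: wopen_raw_closed)

lemma wsubst_raw_fresh: "x \<notin> wfv_raw a \<Longrightarrow> wsubst_raw x v a = a"
  by (induction a) auto

lemma wbv_wsubst_raw: "wbv_raw (wsubst_raw x v a) \<subseteq> wbv_raw a \<union> wbv_raw v"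
  by (induction a) auto

lemma finite_wfv_raw: "finite (wfv_raw a)"
  by (induction a) auto

lemma wsubst_wopen: "wbv v = {} \<Longrightarrow> wsubst x v (wopen k s w) = wopen k (wsubst x v s) (wsubst x v w)"
  by transfer (simp add: wsubst_raw_wopen_raw weq_refl)

lemma wsubst_fresh: "x \<notin> wfv w \<Longrightarrow> wsubst x v w = w"
  by transfer (simp add: wsubst_raw_fresh weq_refl)

lemma wbv_wsubst: "wbv (wsubst x v w) \<subseteq> wbv w \<union> wbv v"
  by transfer (rule wbv_wsubst_raw)

lemma is_world_wsubst: "is_world v \<Longrightarrow> is_world w \<Longrightarrow> is_world (wsubst x v w)"
  unfolding is_world_def using wbv_wsubst by blast

lemma finite_wfv: "finite (wfv w)"
  by transfer (rule finite_wfv_raw)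

lemma wsubst_wvar_same [simp]: "wsubst x v (wvar x) = v"
  by transfer (simp add: weq_refl)

lemma wsubst_wvar_other [simp]: "y \<noteq> x \<Longrightarrow> wsubst x v (wvar y) = wvar y"
  by transfer (simp add: weq_refl)

lemma wbv_wvar [simp]: "wbv (wvar y) = {}"
  by transfer simp

lemma wsubstp_wopenp:
  "is_world v \<Longrightarrow> wsubstp x v (wopenp k s A) = wopenp k (wsubst x v s) (wsubstp x v A)"
  unfolding is_world_def by (induction A arbitrary: k) (auto simp: wsubst_wopen)

lemma wsubstp_fresh: "x \<notin> wfvp A \<Longrightarrow> wsubstp x v A = A"
  by (induction A) (auto simp: wsubst_fresh)

lemma finite_wfvp: "finite (wfvp A)"
  by (induction A) (auto simp: finite_wfv)

lemma wsubstp_topen [simp]: "wsubstp x s (topen k t A) = topen k t (wsubstp x s A)"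
  by (induction A arbitrary: k) auto

lemma tsubstp_wopenp [simp]: "tsubstp x s (wopenp k t A) = wopenp k t (tsubstp x s A)"
  by (induction A arbitrary: k) auto

lemma finite_tfvj [simp]: "finite (tfvj j)"
  by (cases j) (simp add: finite_tfv)

lemma finite_wfvj [simp]: "finite (wfvj j)"
  by (cases j) (simp add: finite_wfvp finite_wfv)

lemma tsubstj_fresh: "x \<notin> tfvj j \<Longrightarrow> tsubstj x s j = j"
  by (cases j) (simp add: tsubstp_fresh)

lemma wsubstj_fresh: "x \<notin> wfvj j \<Longrightarrow> wsubstj x s j = j"
  by (cases j) (simp add: wsubstp_fresh wsubst_fresh)

lemma tsubstj_image_fresh: "x \<notin> \<Union> (tfvj ` G) \<Longrightarrow> tsubstj x s ` G = G"
  by (auto simp: tsubstj_fresh image_iff)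

lemma wsubstj_image_fresh: "x \<notin> \<Union> (wfvj ` G) \<Longrightarrow> wsubstj x s ` G = G"
  by (auto simp: wsubstj_fresh image_iff)

lemma tsubstj_image_mset_fresh: "x \<notin> \<Union> (tfvj ` set_mset D) \<Longrightarrow> image_mset (tsubstj x s) D = D"
  by (induction D) (auto simp: tsubstj_fresh)

lemma wsubstj_image_mset_fresh: "x \<notin> \<Union> (wfvj ` set_mset D) \<Longrightarrow> image_mset (wsubstj x s) D = D"
  by (induction D) (auto simp: wsubstj_fresh)

lemma obtain_tfresh:
  assumes "finite G" and "finite L"
  obtains x where "x \<notin> L" and "tfresh x G D J"
proof -
  have "finite (L \<union> \<Union> (tfvj ` G) \<union> \<Union> (tfvj ` set_mset D) \<union> tfvj J)"
    using assms by simp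
  from ex_new_if_finite[OF infinite_UNIV_nat this]
  obtain x where "x \<notin> L \<union> \<Union> (tfvj ` G) \<union> \<Union> (tfvj ` set_mset D) \<union> tfvj J" ..
  then show thesis
    using that by (auto simp: tfresh_def)
qed

lemma obtain_wfresh:
  assumes "finite G" and "finite L"
  obtains x where "x \<notin> L" and "wfresh x G D J"
proof -
  have "finite (L \<union> \<Union> (wfvj ` G) \<union> \<Union> (wfvj ` set_mset D) \<union> wfvj J)"
    using assms by simp
  from ex_new_if_finite[OF infinite_UNIV_nat this]
  obtain x where "x \<notin> L \<union> \<Union> (wfvj ` G) \<union> \<Union> (wfvj ` set_mset D) \<union> wfvj J" ..
  then show thesis
    using that by (auto simp: wfresh_def)
qed

section \<open>A calculus with cofinitely quantified eigenvariables\<close>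

inductive seqc :: "('p, 'f, 'w::monoid_mult) judg set \<Rightarrow> ('p, 'f, 'w) judg multiset
    \<Rightarrow> ('p, 'f, 'w) judg \<Rightarrow> bool" where
  init: "seqc G {# Jdg (Atm p ts) u #} (Jdg (Atm p ts) u)"
| copy: "Jdg A u \<in> G \<Longrightarrow> seqc G (add_mset (Jdg A u) D) J \<Longrightarrow> seqc G D J"
| tensorR: "seqc G D (Jdg A w) \<Longrightarrow> seqc G D' (Jdg B w) \<Longrightarrow> seqc G (D + D') (Jdg (Tensor A B) w)"
| tensorL: "seqc G (add_mset (Jdg A u) (add_mset (Jdg B u) D)) J
           \<Longrightarrow> seqc G (add_mset (Jdg (Tensor A B) u) D) J"
| oneR: "seqc G {#} (Jdg One w)"
| oneL: "seqc G D J \<Longrightarrow> seqc G (add_mset (Jdg One u) D) J"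
| lolliR: "seqc G (add_mset (Jdg A w) D) (Jdg B w) \<Longrightarrow> seqc G D (Jdg (Lolli A B) w)"
| lolliL: "seqc G D (Jdg A u) \<Longrightarrow> seqc G (add_mset (Jdg B u) D') J
           \<Longrightarrow> seqc G (add_mset (Jdg (Lolli A B) u) (D + D')) J"
| topR: "seqc G D (Jdg Top w)"
| zeroL: "seqc G (add_mset (Jdg Zero u) D) J"
| withR: "seqc G D (Jdg A w) \<Longrightarrow> seqc G D (Jdg B w) \<Longrightarrow> seqc G D (Jdg (With A B) w)"
| withL1: "seqc G (add_mset (Jdg A u) D) J \<Longrightarrow> seqc G (add_mset (Jdg (With A B) u) D) J"
| withL2: "seqc G (add_mset (Jdg B u) D) J \<Longrightarrow> seqc G (add_mset (Jdg (With A B) u) D) J"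
| plusR1: "seqc G D (Jdg A w) \<Longrightarrow> seqc G D (Jdg (Plus A B) w)"
| plusR2: "seqc G D (Jdg B w) \<Longrightarrow> seqc G D (Jdg (Plus A B) w)"
| plusL: "seqc G (add_mset (Jdg A u) D) J \<Longrightarrow> seqc G (add_mset (Jdg B u) D) J
          \<Longrightarrow> seqc G (add_mset (Jdg (Plus A B) u) D) J"
| allTR: "finite L \<Longrightarrow> (\<And>x. x \<notin> L \<Longrightarrow> seqc G D (Jdg (topen 0 (TFree x) A) w))
          \<Longrightarrow> seqc G D (Jdg (AllT A) w)"
| allTL: "is_term t \<Longrightarrow> seqc G (add_mset (Jdg (topen 0 t A) u) D) J
          \<Longrightarrow> seqc G (add_mset (Jdg (AllT A) u) D) J"
| exTR: "is_term t \<Longrightarrow> seqc G D (Jdg (topen 0 t A) w) \<Longrightarrow> seqc G D (Jdg (ExT A) w)"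
| exTL: "finite L \<Longrightarrow> (\<And>x. x \<notin> L \<Longrightarrow> seqc G (add_mset (Jdg (topen 0 (TFree x) A) u) D) J)
          \<Longrightarrow> seqc G (add_mset (Jdg (ExT A) u) D) J"
| allWR: "finite L \<Longrightarrow> (\<And>x. x \<notin> L \<Longrightarrow> seqc G D (Jdg (wopenp 0 (wvar x) A) w))
          \<Longrightarrow> seqc G D (Jdg (AllW A) w)"
| allWL: "is_world v \<Longrightarrow> seqc G (add_mset (Jdg (wopenp 0 v A) u) D) J
          \<Longrightarrow> seqc G (add_mset (Jdg (AllW A) u) D) J"
| exWR: "is_world v \<Longrightarrow> seqc G D (Jdg (wopenp 0 v A) w) \<Longrightarrow> seqc G D (Jdg (ExW A) w)"
| exWL: "finite L \<Longrightarrow> (\<And>x. x \<notin> L \<Longrightarrow> seqc G (add_mset (Jdg (wopenp 0 (wvar x) A) u) D) J)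
          \<Longrightarrow> seqc G (add_mset (Jdg (ExW A) u) D) J"
| bangR: "seqc G {#} (Jdg A w) \<Longrightarrow> seqc G {#} (Jdg (Bang A) w)"
| bangL: "seqc (insert (Jdg A u) G) D J \<Longrightarrow> seqc G (add_mset (Jdg (Bang A) u) D) J"
| atR: "seqc G D (Jdg A u) \<Longrightarrow> seqc G D (Jdg (AtW A u) v)"
| atL: "seqc G (add_mset (Jdg A u) D) J \<Longrightarrow> seqc G (add_mset (Jdg (AtW A u) v) D) J"
| downR: "seqc G D (Jdg (wopenp 0 w A) w) \<Longrightarrow> seqc G D (Jdg (Down A) w)"
| downL: "seqc G (add_mset (Jdg (wopenp 0 v A) v) D) J \<Longrightarrow> seqc G (add_mset (Jdg (Down A) v) D) J"

text \<open>\<open>copy\<close> applies backwards to every goal, so it is kept away from automation.\<close>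

lemmas seqc_intros_but_copy = seqc.intros(1,3-30)

lemma seqc_change_unrestricted:
  assumes "seqc G D J" and "S G H"
    and copy_step: "\<And>G H A u D J. S G H \<Longrightarrow> Jdg A u \<in> G \<Longrightarrow> seqc H (add_mset (Jdg A u) D) J
      \<Longrightarrow> seqc H D J"
    and extend: "\<And>G H B v. S G H \<Longrightarrow> S (insert (Jdg B v) G) (insert (Jdg B v) H)"
  shows "seqc H D J"
  using assms(1,2)
proof (induction arbitrary: H rule: seqc.induct)
  case (copy A u G D J) then show ?case using copy_step[of G H A u D J] by blast
next
  case (bangL A u G D J)
  then have "S (insert (Jdg A u) G) (insert (Jdg A u) H)" by (blast intro: extend)
  with bangL.IH show ?case by (blast intro: seqc.bangL)
qed (auto intro: seqc_intros_but_copy)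

lemma seqc_weaken:
  assumes "seqc G D J" and "G \<subseteq> H"
  shows "seqc H D J"
proof (rule seqc_change_unrestricted[where S = "(\<subseteq>)", OF assms])
  show "seqc H' D' J'" if "G' \<subseteq> H'" "Jdg A u \<in> G'" "seqc H' (add_mset (Jdg A u) D') J'"
    for G' H' A u D' J'
    using that by (meson seqc.copy subsetD)
  show "insert (Jdg B v) G' \<subseteq> insert (Jdg B v) H'" if "G' \<subseteq> H'" for G' H' B v
    using that by blast
qed

lemma seqc_tsubst:
  "seqc G D J \<Longrightarrow> is_term s
    \<Longrightarrow> seqc (tsubstj z s ` G) (image_mset (tsubstj z s) D) (tsubstj z s J)"
proof (induction rule: seqc.induct)
  case (copy A u G D J)
  show ?case by (rule seqc.copy[of "tsubstp z s A" u]) (use copy in \<open>auto intro: rev_image_eqI\<close>)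
next
  case (allTR L G D A w)
  have "seqc (tsubstj z s ` G) (image_mset (tsubstj z s) D)
      (Jdg (topen 0 (TFree x) (tsubstp z s A)) w)"
    if "x \<notin> insert z L" for x
    using allTR.IH[of x] allTR.prems that by (simp add: tsubstp_topen)
  with allTR.hyps(1) show ?case by (auto intro!: seqc.allTR[of "insert z L"])
next
  case (allTL t G A u D J)
  then show ?case
    by (auto intro!: seqc.allTL[of "tsubst_trm z s t"] simp: tsubstp_topen is_term_tsubst_trm)
next
  case (exTR t G D A w)
  then show ?case
    by (auto intro!: seqc.exTR[of "tsubst_trm z s t"] simp: tsubstp_topen is_term_tsubst_trm)
next
  case (exTL L G A u D J)
  have "seqc (tsubstj z s ` G) (add_mset (Jdg (topen 0 (TFree x) (tsubstp z s A)) u)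
      (image_mset (tsubstj z s) D))
      (tsubstj z s J)"
    if "x \<notin> insert z L" for x
    using exTL.IH[of x] exTL.prems that by (simp add: tsubstp_topen)
  with exTL.hyps(1) show ?case by (auto intro!: seqc.exTL[of "insert z L"])
qed (auto intro: seqc_intros_but_copy)

lemma seqc_wsubst:
  "seqc G D J \<Longrightarrow> is_world s
    \<Longrightarrow> seqc (wsubstj z s ` G) (image_mset (wsubstj z s) D) (wsubstj z s J)"
proof (induction rule: seqc.induct)
  case (copy A u G D J)
  show ?case by (rule seqc.copy[of "wsubstp z s A" "wsubst z s u"]) (use copy in force)+
next
  case (allWR L G D A w)
  have "seqc (wsubstj z s ` G) (image_mset (wsubstj z s) D)
      (Jdg (wopenp 0 (wvar x) (wsubstp z s A)) (wsubst z s w))"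
    if "x \<notin> insert z L" for x
    using allWR.IH[of x] allWR.prems that by (simp add: wsubstp_wopenp)
  with allWR.hyps(1) show ?case by (auto intro!: seqc.allWR[of "insert z L"])
next
  case (allWL v G A u D J)
  then show ?case
    by (auto intro!: seqc.allWL[of "wsubst z s v"] simp: wsubstp_wopenp is_world_wsubst)
next
  case (exWR v G D A w)
  then show ?case
    by (auto intro!: seqc.exWR[of "wsubst z s v"] simp: wsubstp_wopenp is_world_wsubst)
next
  case (exWL L G A u D J)
  have "seqc (wsubstj z s ` G) (add_mset (Jdg (wopenp 0 (wvar x) (wsubstp z s A)) (wsubst z s u))
      (image_mset (wsubstj z s) D))
      (wsubstj z s J)"
    if "x \<notin> insert z L" for x
    using exWL.IH[of x] exWL.prems that by (simp add: wsubstp_wopenp)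
  with exWL.hyps(1) show ?case by (auto intro!: seqc.exWL[of "insert z L"])
qed (auto intro: seqc_intros_but_copy simp: wsubstp_wopenp)

lemma seqc_allTR_inst:
  assumes "tfresh x G D (Jdg (AllT A) w)" and "seqc G D (Jdg (topen 0 (TFree x) A) w)"
    and "is_term t"
  shows "seqc G D (Jdg (topen 0 t A) w)"
  using seqc_tsubst[OF assms(2,3), of x] assms(1,3)
  by (simp add: tfresh_def tsubstj_image_fresh tsubstj_image_mset_fresh tsubstp_topen tsubstp_fresh)

lemma seqc_exTL_inst:
  assumes "tfresh x G (add_mset (Jdg (ExT A) u) D) J"
    and "seqc G (add_mset (Jdg (topen 0 (TFree x) A) u) D) J" and "is_term t"
  shows "seqc G (add_mset (Jdg (topen 0 t A) u) D) J"
  using seqc_tsubst[OF assms(2,3), of x] assms(1,3)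
  by (simp add: tfresh_def tsubstj_image_fresh tsubstj_image_mset_fresh tsubstp_topen tsubstp_fresh
      tsubstj_fresh)

lemma seqc_allWR_inst:
  assumes "wfresh x G D (Jdg (AllW A) w)" and "seqc G D (Jdg (wopenp 0 (wvar x) A) w)"
    and "is_world v"
  shows "seqc G D (Jdg (wopenp 0 v A) w)"
  using seqc_wsubst[OF assms(2,3), of x] assms(1,3)
  by (simp add: wfresh_def wsubstj_image_fresh wsubstj_image_mset_fresh wsubstp_wopenp wsubstp_fresh
      wsubst_fresh)

lemma seqc_exWL_inst:
  assumes "wfresh x G (add_mset (Jdg (ExW A) u) D) J"
    and "seqc G (add_mset (Jdg (wopenp 0 (wvar x) A) u) D) J" and "is_world v"
  shows "seqc G (add_mset (Jdg (wopenp 0 v A) u) D) J"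
  using seqc_wsubst[OF assms(2,3), of x] assms(1,3)
  by (simp add: wfresh_def wsubstj_image_fresh wsubstj_image_mset_fresh wsubstp_wopenp wsubstp_fresh
      wsubst_fresh wsubstj_fresh)

lemma seqc_allTR_cofinite_inst:
  assumes "finite G" and "finite L" and "\<And>x. x \<notin> L \<Longrightarrow> seqc G D (Jdg (topen 0 (TFree x) A) w)"
    and "is_term t"
  shows "seqc G D (Jdg (topen 0 t A) w)"
proof -
  obtain x where "x \<notin> L" and "tfresh x G D (Jdg (AllT A) w)"
    using assms(1,2) by (rule obtain_tfresh)
  with assms(3,4) show ?thesis by (blast intro: seqc_allTR_inst)
qed

lemma seqc_exTL_cofinite_inst:
  assumes "finite G" and "finite L"
    and "\<And>x. x \<notin> L \<Longrightarrow> seqc G (add_mset (Jdg (topen 0 (TFree x) A) u) D) J" and "is_term t"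
  shows "seqc G (add_mset (Jdg (topen 0 t A) u) D) J"
proof -
  obtain x where "x \<notin> L" and "tfresh x G (add_mset (Jdg (ExT A) u) D) J"
    using assms(1,2) by (rule obtain_tfresh)
  with assms(3,4) show ?thesis by (blast intro: seqc_exTL_inst)
qed

lemma seqc_allWR_cofinite_inst:
  assumes "finite G" and "finite L" and "\<And>x. x \<notin> L \<Longrightarrow> seqc G D (Jdg (wopenp 0 (wvar x) A) w)"
    and "is_world v"
  shows "seqc G D (Jdg (wopenp 0 v A) w)"
proof -
  obtain x where "x \<notin> L" and "wfresh x G D (Jdg (AllW A) w)"
    using assms(1,2) by (rule obtain_wfresh)
  with assms(3,4) show ?thesis by (blast intro: seqc_allWR_inst)
qed

lemma seqc_exWL_cofinite_inst:
  assumes "finite G" and "finite L"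
    and "\<And>x. x \<notin> L \<Longrightarrow> seqc G (add_mset (Jdg (wopenp 0 (wvar x) A) u) D) J" and "is_world v"
  shows "seqc G (add_mset (Jdg (wopenp 0 v A) u) D) J"
proof -
  obtain x where "x \<notin> L" and "wfresh x G (add_mset (Jdg (ExW A) u) D) J"
    using assms(1,2) by (rule obtain_wfresh)
  with assms(3,4) show ?thesis by (blast intro: seqc_exWL_inst)
qed

lemma seqc_if_seq: "seq G D J \<Longrightarrow> seqc G D J"
proof (induction rule: seq.induct)
  case (copy A u G D J) show ?case by (rule seqc.copy[of A u]) (use copy in auto)
next
  case (allTR x G D A w)
  then have "seqc G D (Jdg (topen 0 (TFree y) A) w)" for y
    by (auto intro: seqc_allTR_inst simp: is_term_def)
  then show ?case by (auto intro: seqc.allTR[of "{}"])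
next
  case (exTL x G D A u J)
  then have "seqc G (add_mset (Jdg (topen 0 (TFree y) A) u) D) J" for y
    by (auto intro: seqc_exTL_inst simp: is_term_def)
  then show ?case by (auto intro: seqc.exTL[of "{}"])
next
  case (allWR x G D A w)
  then have "seqc G D (Jdg (wopenp 0 (wvar y) A) w)" for y
    by (auto intro: seqc_allWR_inst simp: is_world_def)
  then show ?case by (auto intro: seqc.allWR[of "{}"])
next
  case (exWL x G D A u J)
  then have "seqc G (add_mset (Jdg (wopenp 0 (wvar y) A) u) D) J" for y
    by (auto intro: seqc_exWL_inst simp: is_world_def)
  then show ?case by (auto intro: seqc.exWL[of "{}"])
qed (auto intro: seqc_intros_but_copy)

lemmas seq_intros_but_copy = seq.intros(1,3-30)[simplified]

lemma seq_if_seqc: "seqc G D J \<Longrightarrow> finite G \<Longrightarrow> seq G D J"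
proof (induction rule: seqc.induct)
  case (copy A u G D J) show ?case by (rule seq.copy[of A u]) (use copy in auto)
next
  case (allTR L G D A w)
  obtain x where "x \<notin> L" and "tfresh x G D (Jdg (AllT A) w)"
    using allTR.prems allTR.hyps(1) by (rule obtain_tfresh)
  with allTR.IH allTR.prems show ?case by (blast intro: seq.allTR)
next
  case (exTL L G A u D J)
  obtain x where "x \<notin> L" and "tfresh x G (add_mset (Jdg (ExT A) u) D) J"
    using exTL.prems exTL.hyps(1) by (rule obtain_tfresh)
  with exTL.IH exTL.prems show ?case by (auto intro: seq.exTL[simplified])
next
  case (allWR L G D A w)
  obtain x where "x \<notin> L" and "wfresh x G D (Jdg (AllW A) w)"
    using allWR.prems allWR.hyps(1) by (rule obtain_wfresh)
  with allWR.IH allWR.prems show ?case by (blast intro: seq.allWR)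
next
  case (exWL L G A u D J)
  obtain x where "x \<notin> L" and "wfresh x G (add_mset (Jdg (ExW A) u) D) J"
    using exWL.prems exWL.hyps(1) by (rule obtain_wfresh)
  with exWL.IH exWL.prems show ?case by (auto intro: seq.exWL[simplified])
qed (auto intro: seq_intros_but_copy)

lemma seq_iff_seqc: "finite G \<Longrightarrow> seq G D J \<longleftrightarrow> seqc G D J"
  using seq_if_seqc seqc_if_seq by blast

section \<open>Cut admissibility\<close>

text \<open>Unlike the datatype's \<open>size\<close>, this measure ignores the terms, so that instantiating
  a quantifier does not change it.\<close>

primrec prop_size :: "('p, 'f, 'w::monoid_mult) hprop \<Rightarrow> nat" where
  "prop_size (Atm p ts) = 1"
| "prop_size (Tensor A B) = Suc (prop_size A + prop_size B)"
| "prop_size One = 1"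
| "prop_size (Lolli A B) = Suc (prop_size A + prop_size B)"
| "prop_size (With A B) = Suc (prop_size A + prop_size B)"
| "prop_size Top = 1"
| "prop_size (Plus A B) = Suc (prop_size A + prop_size B)"
| "prop_size Zero = 1"
| "prop_size (Bang A) = Suc (prop_size A)"
| "prop_size (AllT A) = Suc (prop_size A)"
| "prop_size (ExT A) = Suc (prop_size A)"
| "prop_size (AtW A w) = Suc (prop_size A)"
| "prop_size (Down A) = Suc (prop_size A)"
| "prop_size (AllW A) = Suc (prop_size A)"
| "prop_size (ExW A) = Suc (prop_size A)"

lemma prop_size_topen [simp]: "prop_size (topen k t A) = prop_size A"
  by (induction A arbitrary: k) auto

lemma prop_size_wopenp [simp]: "prop_size (wopenp k v A) = prop_size A"
  by (induction A arbitrary: k) auto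

definition linear_cut_admissible :: "('p, 'f, 'w::monoid_mult) hprop \<Rightarrow> bool" where
  "linear_cut_admissible P \<longleftrightarrow> (\<forall>G E R J a. finite G \<longrightarrow> seqc G E (Jdg P a)
     \<longrightarrow> seqc G (add_mset (Jdg P a) R) J \<longrightarrow> seqc G (E + R) J)"

definition unrestricted_cut_admissible :: "('p, 'f, 'w::monoid_mult) hprop \<Rightarrow> bool" where
  "unrestricted_cut_admissible P \<longleftrightarrow> (\<forall>G D J a. finite G \<longrightarrow> seqc G {#} (Jdg P a)
     \<longrightarrow> seqc (insert (Jdg P a) G) D J \<longrightarrow> seqc G D J)"

fun derivable_by_right_rule :: "('p, 'f, 'w::monoid_mult) judg set \<Rightarrow> ('p, 'f, 'w) judg multiset
    \<Rightarrow> ('p, 'f, 'w) hprop \<Rightarrow> 'w world \<Rightarrow> bool" where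
  "derivable_by_right_rule G E (Atm p ts) a \<longleftrightarrow> E = {#Jdg (Atm p ts) a#}"
| "derivable_by_right_rule G E (Tensor A B) a \<longleftrightarrow>
     (\<exists>E1 E2. E = E1 + E2 \<and> seqc G E1 (Jdg A a) \<and> seqc G E2 (Jdg B a))"
| "derivable_by_right_rule G E One a \<longleftrightarrow> E = {#}"
| "derivable_by_right_rule G E (Lolli A B) a \<longleftrightarrow> seqc G (add_mset (Jdg A a) E) (Jdg B a)"
| "derivable_by_right_rule G E (With A B) a \<longleftrightarrow> seqc G E (Jdg A a) \<and> seqc G E (Jdg B a)"
| "derivable_by_right_rule G E Top a \<longleftrightarrow> True"
| "derivable_by_right_rule G E (Plus A B) a \<longleftrightarrow> seqc G E (Jdg A a) \<or> seqc G E (Jdg B a)"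
| "derivable_by_right_rule G E Zero a \<longleftrightarrow> False"
| "derivable_by_right_rule G E (Bang A) a \<longleftrightarrow> E = {#} \<and> seqc G {#} (Jdg A a)"
| "derivable_by_right_rule G E (AllT A) a \<longleftrightarrow>
     (\<exists>L. finite L \<and> (\<forall>x. x \<notin> L \<longrightarrow> seqc G E (Jdg (topen 0 (TFree x) A) a)))"
| "derivable_by_right_rule G E (ExT A) a \<longleftrightarrow> (\<exists>t. is_term t \<and> seqc G E (Jdg (topen 0 t A) a))"
| "derivable_by_right_rule G E (AtW A v) a \<longleftrightarrow> seqc G E (Jdg A v)"
| "derivable_by_right_rule G E (Down A) a \<longleftrightarrow> seqc G E (Jdg (wopenp 0 a A) a)"
| "derivable_by_right_rule G E (AllW A) a \<longleftrightarrow>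
     (\<exists>L. finite L \<and> (\<forall>x. x \<notin> L \<longrightarrow> seqc G E (Jdg (wopenp 0 (wvar x) A) a)))"
| "derivable_by_right_rule G E (ExW A) a \<longleftrightarrow> (\<exists>v. is_world v \<and> seqc G E (Jdg (wopenp 0 v A) a))"

fun derivable_by_left_rule :: "('p, 'f, 'w::monoid_mult) judg set \<Rightarrow> ('p, 'f, 'w) judg multiset
    \<Rightarrow> ('p, 'f, 'w) hprop \<Rightarrow> 'w world \<Rightarrow> ('p, 'f, 'w) judg \<Rightarrow> bool" where
  "derivable_by_left_rule G R (Atm p ts) a J \<longleftrightarrow> R = {#} \<and> J = Jdg (Atm p ts) a"
| "derivable_by_left_rule G R (Tensor A B) a J \<longleftrightarrow>
     seqc G (add_mset (Jdg A a) (add_mset (Jdg B a) R)) J"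
| "derivable_by_left_rule G R One a J \<longleftrightarrow> seqc G R J"
| "derivable_by_left_rule G R (Lolli A B) a J \<longleftrightarrow>
     (\<exists>R1 R2. R = R1 + R2 \<and> seqc G R1 (Jdg A a) \<and> seqc G (add_mset (Jdg B a) R2) J)"
| "derivable_by_left_rule G R (With A B) a J \<longleftrightarrow>
     seqc G (add_mset (Jdg A a) R) J \<or> seqc G (add_mset (Jdg B a) R) J"
| "derivable_by_left_rule G R Top a J \<longleftrightarrow> False"
| "derivable_by_left_rule G R (Plus A B) a J \<longleftrightarrow>
     seqc G (add_mset (Jdg A a) R) J \<and> seqc G (add_mset (Jdg B a) R) J"
| "derivable_by_left_rule G R Zero a J \<longleftrightarrow> True"
| "derivable_by_left_rule G R (Bang A) a J \<longleftrightarrow> seqc (insert (Jdg A a) G) R J"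
| "derivable_by_left_rule G R (AllT A) a J \<longleftrightarrow>
     (\<exists>t. is_term t \<and> seqc G (add_mset (Jdg (topen 0 t A) a) R) J)"
| "derivable_by_left_rule G R (ExT A) a J \<longleftrightarrow>
     (\<exists>L. finite L \<and> (\<forall>x. x \<notin> L \<longrightarrow> seqc G (add_mset (Jdg (topen 0 (TFree x) A) a) R) J))"
| "derivable_by_left_rule G R (AtW A v) a J \<longleftrightarrow> seqc G (add_mset (Jdg A v) R) J"
| "derivable_by_left_rule G R (Down A) a J \<longleftrightarrow> seqc G (add_mset (Jdg (wopenp 0 a A) a) R) J"
| "derivable_by_left_rule G R (AllW A) a J \<longleftrightarrow>
     (\<exists>v. is_world v \<and> seqc G (add_mset (Jdg (wopenp 0 v A) a) R) J)"
| "derivable_by_left_rule G R (ExW A) a J \<longleftrightarrow>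
     (\<exists>L. finite L \<and> (\<forall>x. x \<notin> L \<longrightarrow> seqc G (add_mset (Jdg (wopenp 0 (wvar x) A) a) R) J))"

lemma derivable_by_right_rule_mono:
  "derivable_by_right_rule G E P a \<Longrightarrow> G \<subseteq> G' \<Longrightarrow> derivable_by_right_rule G' E P a"
  by (cases P) (auto intro: seqc_weaken)

lemma principal_cut:
  fixes P :: "('p, 'f, 'w::monoid_mult) hprop"
  assumes smaller: "\<And>B :: ('p, 'f, 'w) hprop. prop_size B < prop_size P
      \<Longrightarrow> linear_cut_admissible B \<and> unrestricted_cut_admissible B"
    and "finite G" and right: "derivable_by_right_rule G E P a"
    and left: "derivable_by_left_rule G R P a J"
  shows "seqc G (E + R) J"
proof -
  have cut: "seqc G (E' + R') J'"
    if "prop_size B < prop_size P" "seqc G E' (Jdg B b)" "seqc G (add_mset (Jdg B b) R') J'"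
    for B E' b R' J'
  proof -
    from smaller that(1) have "linear_cut_admissible B" by blast
    with \<open>finite G\<close> that(2,3) show ?thesis unfolding linear_cut_admissible_def by blast
  qed
  show ?thesis
  proof (cases P)
    case (Tensor A B)
    with right obtain E1 E2 where E: "E = E1 + E2"
      and A: "seqc G E1 (Jdg A a)" and B: "seqc G E2 (Jdg B a)" by auto
    from left Tensor have "seqc G (add_mset (Jdg B a) (add_mset (Jdg A a) R)) J"
      by (simp add: add_mset_commute)
    with B Tensor have "seqc G (add_mset (Jdg A a) (E2 + R)) J"
      using cut[of B E2 a "add_mset (Jdg A a) R" J] by simp
    with A Tensor have "seqc G (E1 + (E2 + R)) J"
      using cut[of A E1 a "E2 + R" J] by simp
    with E show ?thesis by (simp add: add.assoc)
  next
    case (Lolli A B)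
    with left obtain R1 R2 where R: "R = R1 + R2"
      and A: "seqc G R1 (Jdg A a)" and B: "seqc G (add_mset (Jdg B a) R2) J" by auto
    from A right Lolli have "seqc G (R1 + E) (Jdg B a)"
      using cut[of A R1 a E "Jdg B a"] by simp
    with B Lolli have "seqc G (R1 + E + R2) J"
      using cut[of B "R1 + E" a R2 J] by simp
    with R show ?thesis by (simp add: ac_simps)
  next
    case (With A B)
    with right left show ?thesis
      using cut[of A E a R J] cut[of B E a R J] by auto
  next
    case (Plus A B)
    with right left show ?thesis
      using cut[of A E a R J] cut[of B E a R J] by auto
  next
    case (Bang A)
    with smaller have "unrestricted_cut_admissible A" by simp
    with Bang right left \<open>finite G\<close> show ?thesis
      by (auto simp: unrestricted_cut_admissible_def)
  next
    case (AllT A)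
    with left obtain t where "is_term t" and l: "seqc G (add_mset (Jdg (topen 0 t A) a) R) J"
      by auto
    with AllT right \<open>finite G\<close> have "seqc G E (Jdg (topen 0 t A) a)"
      by (auto intro: seqc_allTR_cofinite_inst)
    with l AllT show ?thesis using cut[of "topen 0 t A" E a R J] by simp
  next
    case (ExT A)
    with right obtain t where "is_term t" and r: "seqc G E (Jdg (topen 0 t A) a)"
      by auto
    with ExT left \<open>finite G\<close> have "seqc G (add_mset (Jdg (topen 0 t A) a) R) J"
      by (auto intro: seqc_exTL_cofinite_inst)
    with r ExT show ?thesis using cut[of "topen 0 t A" E a R J] by simp
  next
    case (AllW A)
    with left obtain v where "is_world v" and l: "seqc G (add_mset (Jdg (wopenp 0 v A) a) R) J"
      by auto
    with AllW right \<open>finite G\<close> have "seqc G E (Jdg (wopenp 0 v A) a)"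
      by (auto intro: seqc_allWR_cofinite_inst)
    with l AllW show ?thesis using cut[of "wopenp 0 v A" E a R J] by simp
  next
    case (ExW A)
    with right obtain v where "is_world v" and r: "seqc G E (Jdg (wopenp 0 v A) a)"
      by auto
    with ExW left \<open>finite G\<close> have "seqc G (add_mset (Jdg (wopenp 0 v A) a) R) J"
      by (auto intro: seqc_exWL_cofinite_inst)
    with r ExW show ?thesis using cut[of "wopenp 0 v A" E a R J] by simp
  next
    case (AtW A v)
    with right left show ?thesis using cut[of A E v R J] by simp
  next
    case (Down A)
    with right left show ?thesis using cut[of "wopenp 0 a A" E a R J] by simp
  qed (use right left in \<open>auto intro: seqc.init\<close>)
qed

lemma cut_left_commute:
  assumes right: "\<And>G' E. G \<subseteq> G' \<Longrightarrow> finite G' \<Longrightarrow> derivable_by_right_rule G' E P a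
      \<Longrightarrow> seqc G' (E + R) J"
  shows "seqc G' E K \<Longrightarrow> K = Jdg P a \<Longrightarrow> G \<subseteq> G' \<Longrightarrow> finite G' \<Longrightarrow> seqc G' (E + R) J"
proof (induction rule: seqc.induct)
  case init show ?case by (rule right) (use init in force)+
next
  case (copy A u G' E K) show ?case by (rule seqc.copy[of A u]) (use copy in auto)
next
  case (tensorR G' D1 A w D2 B) show ?case by (rule right) (use tensorR in force)+
next
  case oneR show ?case by (rule right) (use oneR in force)+
next
  case lolliR show ?case by (rule right) (use lolliR in force)+
next
  case (lolliL G' E1 A u B E2 K)
  then show ?case using seqc.lolliL[of G' E1 A u B "E2 + R" J] by (simp add: add.assoc)
next
  case topR show ?case by (rule right) (use topR in force)+
next
  case withR show ?case by (rule right) (use withR in force)+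
next
  case plusR1 show ?case by (rule right) (use plusR1 in force)+
next
  case plusR2 show ?case by (rule right) (use plusR2 in force)+
next
  case allTR show ?case by (rule right) (use allTR in force)+
next
  case exTR show ?case by (rule right) (use exTR in force)+
next
  case allWR show ?case by (rule right) (use allWR in force)+
next
  case exWR show ?case by (rule right) (use exWR in force)+
next
  case bangR show ?case by (rule right) (use bangR in force)+
next
  case atR show ?case by (rule right) (use atR in force)+
next
  case downR show ?case by (rule right) (use downR in force)+
qed (auto intro: seqc_intros_but_copy)

lemma cut_right_commute:
  assumes left: "\<And>G' R J. G \<subseteq> G' \<Longrightarrow> finite G' \<Longrightarrow> derivable_by_left_rule G' R P a J
      \<Longrightarrow> seqc G' (E + R) J"
  shows "seqc G' D J \<Longrightarrow> G \<subseteq> G' \<Longrightarrow> finite G' \<Longrightarrow> Jdg P a \<in># D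
    \<Longrightarrow> seqc G' (E + (D - {#Jdg P a#})) J"
proof (induction rule: seqc.induct)
  case (init G' p ts u)
  then have "Jdg P a = Jdg (Atm p ts) u" by simp
  with init left[of G' "{#}" "Jdg (Atm p ts) u"] show ?case by simp
next
  case (copy A u G' D K) show ?case by (rule seqc.copy[of A u]) (use copy in auto)
next
  case (tensorR G' D1 A w D2 B)
  show ?case
  proof (cases "Jdg P a \<in># D1")
    case True
    then obtain F where "D1 = add_mset (Jdg P a) F" by (blast dest: multi_member_split)
    with tensorR show ?thesis using seqc.tensorR[of G' "E + F" A w D2 B] by (simp add: add.assoc)
  next
    case False
    with tensorR.prems obtain F where "D2 = add_mset (Jdg P a) F" by (auto dest: multi_member_split)
    with tensorR show ?thesis using seqc.tensorR[of G' D1 A w "E + F" B] by (simp add: ac_simps)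
  qed
next
  case (tensorL G' A u B D K)
  then show ?case using left[of G' D K]
    by (cases "Jdg P a = Jdg (Tensor A B) u") (force intro!: seqc.tensorL)+
next
  case (oneL G' D K u)
  then show ?case using left[of G' D K]
    by (cases "Jdg P a = Jdg One u") (force intro!: seqc.oneL)+
next
  case (lolliL G' D1 A u B D2 K)
  consider "Jdg P a = Jdg (Lolli A B) u" | F where "D1 = add_mset (Jdg P a) F"
    | F where "D2 = add_mset (Jdg P a) F"
    using lolliL.prems(3) by (auto dest: multi_member_split)
  then show ?case
  proof cases
    case 1
    with lolliL left[of G' "D1 + D2" K] show ?thesis by force
  next
    case (2 F)
    with lolliL show ?thesis using seqc.lolliL[of G' "E + F" A u B D2 K] by (auto simp: ac_simps)
  next
    case (3 F)
    with lolliL show ?thesis using seqc.lolliL[of G' D1 A u B "E + F" K] by (auto simp: ac_simps)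
  qed
next
  case (zeroL G' u D K)
  then show ?case using left[of G' D K]
    by (cases "Jdg P a = Jdg Zero u") (force intro!: seqc.zeroL)+
next
  case (withL1 G' A u D K B)
  then show ?case using left[of G' D K]
    by (cases "Jdg P a = Jdg (With A B) u") (force intro!: seqc.withL1)+
next
  case (withL2 G' B u D K A)
  then show ?case using left[of G' D K]
    by (cases "Jdg P a = Jdg (With A B) u") (force intro!: seqc.withL2)+
next
  case (plusL G' A u D K B)
  then show ?case using left[of G' D K]
    by (cases "Jdg P a = Jdg (Plus A B) u") (force intro!: seqc.plusL)+
next
  case (allTL t G' A u D K)
  then show ?case using left[of G' D K]
    by (cases "Jdg P a = Jdg (AllT A) u") (force intro!: seqc.allTL[of t])+
next
  case (exTL L G' A u D K)
  then show ?case using left[of G' D K]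
    by (cases "Jdg P a = Jdg (ExT A) u") (force intro!: seqc.exTL[of L])+
next
  case (allWL v G' A u D K)
  then show ?case using left[of G' D K]
    by (cases "Jdg P a = Jdg (AllW A) u") (force intro!: seqc.allWL[of v])+
next
  case (exWL L G' A u D K)
  then show ?case using left[of G' D K]
    by (cases "Jdg P a = Jdg (ExW A) u") (force intro!: seqc.exWL[of L])+
next
  case (bangL A u G' D K)
  then show ?case using left[of G' D K]
    by (cases "Jdg P a = Jdg (Bang A) u") (force intro!: seqc.bangL)+
next
  case (atL G' A u D K v)
  then show ?case using left[of G' D K]
    by (cases "Jdg P a = Jdg (AtW A u) v") (force intro!: seqc.atL)+
next
  case (downL G' v A D K)
  then show ?case using left[of G' D K]
    by (cases "Jdg P a = Jdg (Down A) v") (force intro!: seqc.downL)+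
qed (auto intro: seqc_intros_but_copy)

lemma unrestricted_cut_if_linear:
  assumes "linear_cut_admissible P"
  shows "unrestricted_cut_admissible P"
  unfolding unrestricted_cut_admissible_def
proof (intro allI impI)
  fix G D J a
  assume "finite G" and "seqc G {#} (Jdg P a)" and "seqc (insert (Jdg P a) G) D J"
  let ?S = "\<lambda>G' H. G' \<subseteq> insert (Jdg P a) H \<and> finite H \<and> seqc H {#} (Jdg P a)"
  show "seqc G D J"
  proof (rule seqc_change_unrestricted[of _ D J ?S])
    show "seqc H D' J'" if "?S G' H" and "Jdg A u \<in> G'" and "seqc H (add_mset (Jdg A u) D') J'"
      for G' H A u D' J'
    proof (cases "Jdg A u = Jdg P a")
      case True
      with that assms show ?thesis unfolding linear_cut_admissible_def by fastforce
    next
      case False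
      show ?thesis by (rule seqc.copy[of A u]) (use False that in auto)
    qed
    show "?S (insert (Jdg B v) G') (insert (Jdg B v) H)" if "?S G' H" for G' H B v
      using that by (auto intro: seqc_weaken)
  qed (use \<open>finite G\<close> \<open>seqc G {#} (Jdg P a)\<close> \<open>seqc (insert (Jdg P a) G) D J\<close> in auto)
qed

lemma cut_admissible: "linear_cut_admissible P \<and> unrestricted_cut_admissible P"
proof (induction "prop_size P" arbitrary: P rule: less_induct)
  case less
  have "linear_cut_admissible P"
    unfolding linear_cut_admissible_def
  proof (intro allI impI)
    fix G E R J a
    assume "finite G" and left_premise: "seqc G E (Jdg P a)"
      and right_premise: "seqc G (add_mset (Jdg P a) R) J"
    have "seqc G' (E' + R) J"
      if "G \<subseteq> G'" and "finite G'" and "derivable_by_right_rule G' E' P a" for G' E'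
    proof -
      from right_premise \<open>G \<subseteq> G'\<close> have "seqc G' (add_mset (Jdg P a) R) J" by (rule seqc_weaken)
      moreover have "seqc G'' (E' + R') J'"
        if "G' \<subseteq> G''" "finite G''" "derivable_by_left_rule G'' R' P a J'" for G'' R' J'
        using principal_cut[OF less] derivable_by_right_rule_mono \<open>derivable_by_right_rule G' E' P a\<close>
          that by blast
      ultimately show ?thesis
        using cut_right_commute[of G' P a E'] \<open>finite G'\<close> by fastforce
    qed
    then show "seqc G (E + R) J"
      using cut_left_commute[of G P a R J] left_premise \<open>finite G\<close> by blast
  qed
  then show ?case by (simp add: unrestricted_cut_if_linear)
qed

theorem theorem1:
  fixes G :: "('p, 'f, 'w::monoid_mult) judg set"
    and D D' :: "('p, 'f, 'w) judg multiset"
    and A C :: "('p, 'f, 'w) hprop"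
    and u w :: "'w world"
  assumes "finite G" and "\<forall>j\<in>G. is_judg j" and "\<forall>j\<in>#D. is_judg j"
    and "is_prop A" and "is_prop C" and "is_world u" and "is_world w"
  shows "((\<forall>j\<in>#D'. is_judg j) \<and> seq G D (Jdg A u) \<and> seq G (D' + {# Jdg A u #}) (Jdg C w)
            \<longrightarrow> seq G (D + D') (Jdg C w))
       \<and> (seq G {#} (Jdg A u) \<and> seq (insert (Jdg A u) G) D (Jdg C w)
            \<longrightarrow> seq G D (Jdg C w))"
proof -
  have "linear_cut_admissible A" and "unrestricted_cut_admissible A"
    using cut_admissible by blast+
  with \<open>finite G\<close> show ?thesis
    unfolding linear_cut_admissible_def unrestricted_cut_admissible_def
    by (auto simp: seq_iff_seqc)
qed

end
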